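(* Let $V$ be a real-valued, locally integrable potential on $[0,\infty)$ or on $\mathbb{R}$, and let $H=-D^2+V$ be the associated Schrödinger operator on $L^2(0,\infty)$ or on $L^2(\mathbb{R})$, respectively. Suppose that \[ \limsup_{x\to \infty}|xV(x)|=a<\infty . \] Then $H$ admits no eigenvalue larger than $\frac{4a^2}{\pi^2}$.
   Context: $D$ denotes differentiation $d/dx$. $H$ is a self-adjoint realization of $-\frac{d^2}{dx^2}+V$ (on the half-line, with a self-adjoint boundary condition at $0$). A number $\lambda$ is an eigenvalue of $H$ if there is a nonzero $u\in L^2$ in the domain of $H$ (in particular satisfying the boundary condition, in the half-line case) solving $-u''+Vu=\lambda u$. *)

theory Defs
  imports "HOL-Analysis.Analysis"
begin

definition locally_integrable_pot :: "real set \<Rightarrow> (real \<Rightarrow> real) \<Rightarrow> bool" where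
  "locally_integrable_pot I V \<longleftrightarrow>
     (\<forall>s t. {s..t} \<subseteq> I \<longrightarrow> set_integrable lborel {s..t} V)"

text \<open>u (with derivative u') solves -u'' + V u = lam u on the interval I in the
  Caratheodory sense: u is differentiable with derivative u', and u' is the
  indefinite integral of (V - lam) u, i.e. u' is absolutely continuous with
  u'' = (V - lam) u almost everywhere.\<close>
definition sl_solution ::
  "(real \<Rightarrow> real) \<Rightarrow> real \<Rightarrow> real set \<Rightarrow> (real \<Rightarrow> complex) \<Rightarrow> (real \<Rightarrow> complex) \<Rightarrow> bool" where
  "sl_solution V lam I u u' \<longleftrightarrow>
     (\<forall>x\<in>I. (u has_vector_derivative u' x) (at x within I)) \<and>
     (\<forall>x\<in>I. \<forall>y\<in>I. y \<le> x \<longrightarrow>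
        ((\<lambda>t. complex_of_real (V t - lam) * u t) has_integral (u' x - u' y)) {y..x})"

definition square_integrable_on :: "real set \<Rightarrow> (real \<Rightarrow> complex) \<Rightarrow> bool" where
  "square_integrable_on I u \<longleftrightarrow> set_integrable lborel I (\<lambda>x. (cmod (u x))\<^sup>2)"

text \<open>Eigenvalue of the self-adjoint realization of -D^2 + V on L^2(0,oo) with the
  boundary condition cos(alpha) u(0) + sin(alpha) u'(0) = 0 at the regular endpoint 0.\<close>
definition halfline_eigenvalue :: "(real \<Rightarrow> real) \<Rightarrow> real \<Rightarrow> real \<Rightarrow> bool" where
  "halfline_eigenvalue V \<alpha> lam \<longleftrightarrow>
     (\<exists>u u'. sl_solution V lam {0..} u u' \<and> square_integrable_on {0..} u \<and>
        (\<exists>x\<ge>0. u x \<noteq> 0) \<and>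
        complex_of_real (cos \<alpha>) * u 0 + complex_of_real (sin \<alpha>) * u' 0 = 0)"

definition line_eigenvalue :: "(real \<Rightarrow> real) \<Rightarrow> real \<Rightarrow> bool" where
  "line_eigenvalue V lam \<longleftrightarrow>
     (\<exists>u u'. sl_solution V lam UNIV u u' \<and> square_integrable_on UNIV u \<and>
        (\<exists>x. u x \<noteq> 0))"

end

theory Submission
  imports Defs
begin

(*
  Write a real solution of -w'' + V w = k^2 w as w t = Im (v t e^{ikt}) with the
  variation-of-constants amplitude v = (w'/k + i w) e^{-ikt}, so that v' = (V w / k) e^{-ikt}.
  On J_m = [m pi/k, (m+1) pi/k], where |V t| <= c/t, v is nearly constant and w is nearly
  |v| sin (kt + arg v); since |sin (2 (kt + arg v))| averages to 2/pi over J_m, |v|^2 is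
  multiplied across J_m by at least 1 - 2c/(pi k m) - O(1/m^2).  If k^2 > 4a^2/pi^2, a
  constant c with a < c < pi k/2 makes m |v(m pi/k)|^2 eventually nondecreasing, while the
  integral of w^2 over J_m is at least |v(m pi/k)|^2 pi/(4k).  Hence the integral of w^2
  dominates a harmonic series, and w is not square integrable.
*)

lemma nonpos_if_le_mult_all_pos:
  fixes x K :: real
  assumes "\<And>e. e > 0 \<Longrightarrow> x \<le> e * K"
  shows "x \<le> 0"
proof (rule ccontr)
  assume "\<not> x \<le> 0"
  then have x: "x > 0" by simp
  show False
  proof (cases "K \<le> 0")
    case True
    then show False using assms[of 1] x by simp
  next
    case False
    have "x \<le> (x / (2*K)) * K" using assms[of "x/(2*K)"] x False by simp
    also have "\<dots> = x/2" using False by (simp add: field_simps)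
    finally show False using x by simp
  qed
qed

lemma eq_if_local_increments_small:
  fixes F :: "real \<Rightarrow> 'a::real_normed_vector" and G :: "real \<Rightarrow> real"
  assumes ab: "a \<le> b"
    and small: "\<And>e. e > 0 \<Longrightarrow> \<exists>d>0. \<forall>x y. a \<le> x \<longrightarrow> x \<le> y \<longrightarrow> y \<le> b \<longrightarrow> y - x < d
                  \<longrightarrow> norm (F y - F x) \<le> e * (G y - G x)"
  shows "F b = F a"
proof -
  have "norm (F b - F a) \<le> e * (G b - G a)" if e: "e > 0" for e
  proof -
    obtain d where d: "d > 0" and dH: "\<forall>x y. a \<le> x \<longrightarrow> x \<le> y \<longrightarrow> y \<le> b \<longrightarrow> y - x < d
           \<longrightarrow> norm (F y - F x) \<le> e * (G y - G x)" using small[OF e] by blast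
    obtain n :: nat where n: "(b - a) / d < n" using reals_Archimedean2 by blast
    have "(b - a) / d \<ge> 0" using ab d by simp
    then have npos: "n > 0" using n by linarith
    define s where "s i = a + real i * (b - a) / n" for i
    have step: "s (Suc i) - s i = (b - a) / n" for i
      by (simp add: s_def diff_divide_distrib[symmetric] algebra_simps)
    have step_lt: "(b - a) / n < d" using n d npos by (simp add: field_simps)
    have s_bounds: "a \<le> s i" "s i \<le> s (Suc i)" "s (Suc i) \<le> b" if "i < n" for i
    proof -
      show "a \<le> s i" using ab npos by (simp add: s_def)
      show "s i \<le> s (Suc i)" using ab step[of i] divide_nonneg_nonneg[of "b - a" "real n"] by linarith
      have "real (Suc i) * (b - a) \<le> real n * (b - a)" using that ab by (intro mult_right_mono) auto
      then show "s (Suc i) \<le> b" using npos by (simp add: s_def field_simps)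
    qed
    have s_ends: "s 0 = a" "s n = b" using npos by (auto simp: s_def)
    have "norm (F b - F a) = norm (\<Sum>i<n. F (s (Suc i)) - F (s i))"
      by (subst sum_lessThan_telescope) (simp add: s_ends)
    also have "\<dots> \<le> (\<Sum>i<n. norm (F (s (Suc i)) - F (s i)))" by (rule norm_sum)
    also have "\<dots> \<le> (\<Sum>i<n. e * (G (s (Suc i)) - G (s i)))"
      using dH s_bounds step step_lt by (intro sum_mono) auto
    also have "\<dots> = e * (\<Sum>i<n. G (s (Suc i)) - G (s i))" by (simp add: sum_distrib_left)
    also have "\<dots> = e * (G b - G a)" by (subst sum_lessThan_telescope) (simp add: s_ends)
    finally show ?thesis .
  qed
  then have "norm (F b - F a) \<le> 0" by (rule nonpos_if_le_mult_all_pos)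
  then show ?thesis by simp
qed

lemma has_integral_integral_diff:
  fixes F :: "real \<Rightarrow> 'a::banach"
  assumes "F integrable_on {a..b}" "a \<le> x" "x \<le> y" "y \<le> b"
  shows "(F has_integral (integral {a..y} F - integral {a..x} F)) {x..y}"
proof -
  have "integral {a..x} F + integral {x..y} F = integral {a..y} F"
    using assms by (intro Henstock_Kurzweil_Integration.integral_combine) (auto intro: integrable_subinterval_real)
  moreover have "F integrable_on {x..y}" using assms integrable_subinterval_real by fastforce
  ultimately show ?thesis by (metis add_diff_cancel_left' integrable_integral)
qed

lemma norm_product_increment_le:
  fixes P Q g h :: "real \<Rightarrow> complex"
  assumes Pg: "(g has_integral (P y - P x)) {x..y}" and Qh: "(h has_integral (Q y - Q x)) {x..y}"
    and f: "((\<lambda>t. g t * Q t + P t * h t) has_integral I) {x..y}"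
    and gh: "((\<lambda>t. norm (g t) + norm (h t)) has_integral J) {x..y}"
    and P_close: "\<And>t. t \<in> {x..y} \<Longrightarrow> norm (P x - P t) \<le> e"
    and Q_close: "\<And>t. t \<in> {x..y} \<Longrightarrow> norm (Q y - Q t) \<le> e"
  shows "norm (P y * Q y - P x * Q x - I) \<le> e * J"
proof -
  have "((\<lambda>t. g t * Q y + P x * h t - (g t * Q t + P t * h t)) has_integral
          ((P y - P x) * Q y + P x * (Q y - Q x) - I)) {x..y}"
    by (intro has_integral_diff has_integral_add has_integral_mult_left has_integral_mult_right Pg Qh f)
  then have diff: "((\<lambda>t. g t * (Q y - Q t) + (P x - P t) * h t) has_integral
          (P y * Q y - P x * Q x - I)) {x..y}"
    by (simp add: algebra_simps)
  have "norm (g t * (Q y - Q t) + (P x - P t) * h t) \<le> e * (norm (g t) + norm (h t))"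
    if "t \<in> {x..y}" for t
  proof -
    have "norm (g t * (Q y - Q t) + (P x - P t) * h t)
          \<le> norm (g t) * norm (Q y - Q t) + norm (P x - P t) * norm (h t)"
      by (metis norm_mult norm_triangle_ineq)
    also have "\<dots> \<le> norm (g t) * e + e * norm (h t)"
      using P_close[OF that] Q_close[OF that] by (intro add_mono mult_left_mono mult_right_mono) auto
    finally show ?thesis by (simp add: algebra_simps)
  qed
  then have "norm (integral {x..y} (\<lambda>t. g t * (Q y - Q t) + (P x - P t) * h t))
      \<le> integral {x..y} (\<lambda>t. e * (norm (g t) + norm (h t)))"
    using diff has_integral_mult_right[OF gh] by (intro integral_norm_bound_integral) auto
  then show ?thesis
    using diff integral_unique[OF gh] by (simp add: integral_unique)
qed

lemma absolutely_integrable_continuous_mult: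
  fixes R k :: "real \<Rightarrow> 'a::{euclidean_space, real_algebra}"
  assumes "continuous_on {a..b} R" "k absolutely_integrable_on {a..b}"
  shows "(\<lambda>t. R t * k t) absolutely_integrable_on {a..b}"
  using assms by (intro absolutely_integrable_bounded_measurable_product[OF bilinear_times]
      continuous_imp_measurable_on_sets_lebesgue compact_imp_bounded compact_continuous_image) auto

text \<open>P and Q are only indefinite integrals, so \<open>integration_by_parts\<close>, which needs
  derivatives outside a countable set, does not apply.\<close>
lemma has_integral_product_indefinite:
  fixes P Q g h :: "real \<Rightarrow> complex"
  assumes ab: "a \<le> b"
    and Pc: "continuous_on {a..b} P" and Qc: "continuous_on {a..b} Q"
    and gi: "g absolutely_integrable_on {a..b}" and hi: "h absolutely_integrable_on {a..b}"
    and Pg: "\<And>s t. a \<le> s \<Longrightarrow> s \<le> t \<Longrightarrow> t \<le> b \<Longrightarrow> (g has_integral (P t - P s)) {s..t}"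
    and Qh: "\<And>s t. a \<le> s \<Longrightarrow> s \<le> t \<Longrightarrow> t \<le> b \<Longrightarrow> (h has_integral (Q t - Q s)) {s..t}"
  shows "((\<lambda>t. g t * Q t + P t * h t) has_integral (P b * Q b - P a * Q a)) {a..b}"
proof -
  let ?f = "\<lambda>t. g t * Q t + P t * h t"
  let ?n = "\<lambda>t. norm (g t) + norm (h t)"
  have "?f absolutely_integrable_on {a..b}"
    using absolutely_integrable_continuous_mult[OF Qc gi] absolutely_integrable_continuous_mult[OF Pc hi]
    by (intro set_integral_add) (simp_all add: mult.commute)
  then have fi: "?f integrable_on {a..b}" by (rule set_lebesgue_integral_eq_integral)
  have ni: "?n integrable_on {a..b}"
    using gi hi by (intro integrable_add) (auto simp: absolutely_integrable_on_def)
  define D where "D x = P x * Q x - P a * Q a - integral {a..x} ?f" for x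
  have "D b = D a"
  proof (rule eq_if_local_increments_small[OF ab, where G = "\<lambda>x. integral {a..x} ?n"])
    fix e :: real assume e: "e > 0"
    obtain d1 where d1: "d1 > 0" and P_close: "\<And>x x'. x \<in> {a..b} \<Longrightarrow> x' \<in> {a..b} \<Longrightarrow> dist x' x < d1 \<Longrightarrow> dist (P x') (P x) < e"
      using compact_uniformly_continuous[OF Pc] e unfolding uniformly_continuous_on_def by (metis compact_Icc)
    obtain d2 where d2: "d2 > 0" and Q_close: "\<And>x x'. x \<in> {a..b} \<Longrightarrow> x' \<in> {a..b} \<Longrightarrow> dist x' x < d2 \<Longrightarrow> dist (Q x') (Q x) < e"
      using compact_uniformly_continuous[OF Qc] e unfolding uniformly_continuous_on_def by (metis compact_Icc)
    show "\<exists>d>0. \<forall>x y. a \<le> x \<longrightarrow> x \<le> y \<longrightarrow> y \<le> b \<longrightarrow> y - x < d \<longrightarrow>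
            norm (D y - D x) \<le> e * (integral {a..y} ?n - integral {a..x} ?n)"
    proof (intro exI[of _ "min d1 d2"] conjI allI impI)
      fix x y assume xy: "a \<le> x" "x \<le> y" "y \<le> b" "y - x < min d1 d2"
      have gxy: "(g has_integral (P y - P x)) {x..y}" and hxy: "(h has_integral (Q y - Q x)) {x..y}"
        using Pg Qh xy by auto
      have fxy: "(?f has_integral integral {a..y} ?f - integral {a..x} ?f) {x..y}"
        and nxy: "(?n has_integral integral {a..y} ?n - integral {a..x} ?n) {x..y}"
        using has_integral_integral_diff[OF fi xy(1-3)] has_integral_integral_diff[OF ni xy(1-3)] .
      have "norm (P y * Q y - P x * Q x - (integral {a..y} ?f - integral {a..x} ?f))
            \<le> e * (integral {a..y} ?n - integral {a..x} ?n)"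
      proof (rule norm_product_increment_le[OF gxy hxy fxy nxy])
        show "norm (P x - P t) \<le> e" if "t \<in> {x..y}" for t
          using P_close[of x t] that xy by (auto simp: dist_norm norm_minus_commute)
        show "norm (Q y - Q t) \<le> e" if "t \<in> {x..y}" for t
          using Q_close[of t y] that xy by (auto simp: dist_norm)
      qed
      then show "norm (D y - D x) \<le> e * (integral {a..y} ?n - integral {a..x} ?n)"
        by (simp add: D_def algebra_simps)
    qed (use d1 d2 in auto)
  qed
  then show ?thesis using fi unfolding D_def by (simp add: integrable_integral)
qed

lemma has_integral_Complex:
  assumes "(f1 has_integral y1) S" "(f2 has_integral y2) S"
  shows "((\<lambda>t. Complex (f1 t) (f2 t)) has_integral Complex y1 y2) S"
proof -
  have "((\<lambda>t. of_real (f1 t) + \<i> * of_real (f2 t)) has_integral (of_real y1 + \<i> * of_real y2)) S"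
    by (intro has_integral_add has_integral_mult_right has_integral_of_real assms)
  then show ?thesis by (simp add: Complex_eq)
qed

lemma absolutely_integrable_Complex:
  fixes f1 f2 :: "real \<Rightarrow> real"
  assumes "f1 absolutely_integrable_on S" "f2 absolutely_integrable_on S"
  shows "(\<lambda>t. Complex (f1 t) (f2 t)) absolutely_integrable_on S"
proof (rule absolutely_integrable_integrable_bound[where g = "\<lambda>t. \<bar>f1 t\<bar> + \<bar>f2 t\<bar>"])
  show "norm (Complex (f1 t) (f2 t)) \<le> \<bar>f1 t\<bar> + \<bar>f2 t\<bar>" for t
    using cmod_le[of "Complex (f1 t) (f2 t)"] by simp
  show "(\<lambda>t. Complex (f1 t) (f2 t)) integrable_on S"
    using has_integral_Complex[of f1 "integral S f1" S f2 "integral S f2"] assms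
    by (auto simp: absolutely_integrable_on_def integrable_on_def)
  show "(\<lambda>t. \<bar>f1 t\<bar> + \<bar>f2 t\<bar>) integrable_on S"
    using assms by (intro integrable_add) (auto simp: absolutely_integrable_on_def)
qed

lemma norm_diff_le_if_integral_kernel_le:
  fixes v :: "real \<Rightarrow> 'a::real_normed_vector" and q :: "real \<Rightarrow> real"
  assumes st: "s \<le> t" and vc: "continuous_on {s..t} v"
    and q0: "\<And>r. r \<in> {s..t} \<Longrightarrow> 0 \<le> q r"
    and qi: "q integrable_on {s..t}" and qvi: "(\<lambda>r. q r * norm (v r)) integrable_on {s..t}"
    and qk: "integral {s..t} q \<le> \<kappa>" and \<kappa>: "\<kappa> < 1"
    and incr: "\<And>r. r \<in> {s..t} \<Longrightarrow> norm (v r - v s) \<le> integral {s..r} (\<lambda>\<tau>. q \<tau> * norm (v \<tau>))"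
    and r: "r \<in> {s..t}"
  shows "norm (v r - v s) \<le> \<kappa> * norm (v s) / (1 - \<kappa>)"
proof -
  have "\<exists>x\<in>{s..t}. \<forall>y\<in>{s..t}. norm (v y) \<le> norm (v x)"
    using st by (intro continuous_attains_sup continuous_intros vc) auto
  then obtain rs where rs: "rs \<in> {s..t}" and rs_max: "\<And>y. y \<in> {s..t} \<Longrightarrow> norm (v y) \<le> norm (v rs)"
    by blast
  define M where "M = norm (v rs)"
  have M0: "M \<ge> 0" by (simp add: M_def)
  have \<kappa>0: "\<kappa> \<ge> 0" using qk integral_nonneg[OF qi q0] by linarith
  have bnd: "norm (v r - v s) \<le> \<kappa> * M" if r: "r \<in> {s..t}" for r
  proof -
    have sub: "{s..r} \<subseteq> {s..t}" using r by auto
    have qi': "q integrable_on {s..r}" using qi sub integrable_subinterval_real by blast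
    have "integral {s..r} (\<lambda>\<tau>. q \<tau> * norm (v \<tau>)) \<le> integral {s..r} (\<lambda>\<tau>. q \<tau> * M)"
      using qvi sub q0 rs_max integrable_on_mult_left[OF qi', of M]
      by (intro integral_le) (auto intro: integrable_subinterval_real mult_left_mono simp: M_def)
    also have "\<dots> = integral {s..r} q * M" by simp
    also have "\<dots> \<le> integral {s..t} q * M"
      using M0 integral_subset_le[OF sub qi' qi] q0 by (intro mult_right_mono) auto
    also have "\<dots> \<le> \<kappa> * M" using M0 qk by (intro mult_right_mono) auto
    finally show ?thesis using incr[OF r] by linarith
  qed
  have "M \<le> norm (v s) + norm (v rs - v s)" unfolding M_def by (metis norm_triangle_sub)
  then have "M * (1 - \<kappa>) \<le> norm (v s)" using bnd[OF rs] by (simp add: algebra_simps)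
  then have "M \<le> norm (v s) / (1 - \<kappa>)" using \<kappa> by (simp add: field_simps)
  then have "\<kappa> * M \<le> \<kappa> * (norm (v s) / (1 - \<kappa>))" using \<kappa>0 by (intro mult_left_mono)
  then show ?thesis using bnd[OF r] by simp
qed

lemma integral_periodic_shift:
  fixes f :: "real \<Rightarrow> real"
  assumes fc: "continuous_on UNIV f" and L: "L > 0" and per: "\<And>u. f (u + L) = f u"
  shows "integral {x..x + L} f = integral {y..y + L} f"
proof -
  define c where "c = min x y"
  define d where "d = max x y"
  define \<Phi> where "\<Phi> v = integral {c..v} f" for v
  define H where "H u = \<Phi> (u + L) - \<Phi> u" for u
  have fi: "f integrable_on {a..b}" for a b
    by (rule integrable_continuous_real, rule continuous_on_subset[OF fc]) auto
  have H_eq: "H u = integral {u..u+L} f" if "c \<le> u" for u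
    using Henstock_Kurzweil_Integration.integral_combine[of c u "u + L" f] that L fi by (simp add: H_def \<Phi>_def)
  have \<Phi>_deriv: "(\<Phi> has_field_derivative f u) (at u within {c..d+L})" if "u \<in> {c..d+L}" for u
    unfolding \<Phi>_def using that fc by (intro integral_has_real_derivative) (auto intro: continuous_on_subset)
  have H_deriv: "(H has_field_derivative 0) (at u within {c..d})" if u: "u \<in> {c..d}" for u
  proof -
    have "(\<Phi> has_field_derivative f (u + L)) (at (u + L) within (\<lambda>u. u + L) ` {c..d})"
      using \<Phi>_deriv[of "u + L"] u L by (auto intro: has_field_derivative_subset)
    from DERIV_image_chain[OF this DERIV_add[OF DERIV_ident DERIV_const[of L]]]
    have "((\<lambda>u. \<Phi> (u + L)) has_field_derivative f (u + L)) (at u within {c..d})"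
      by (simp add: o_def)
    moreover have "(\<Phi> has_field_derivative f u) (at u within {c..d})"
      using \<Phi>_deriv[of u] u L by (auto intro: has_field_derivative_subset)
    ultimately have "(H has_field_derivative f (u + L) - f u) (at u within {c..d})"
      unfolding H_def by (rule DERIV_diff)
    then show ?thesis by (simp add: per)
  qed
  have H_deriv0: "(H has_derivative (\<lambda>h. 0)) (at u within {c..d})" if "u \<in> {c..d}" for u
    using H_deriv[OF that] by (simp add: has_field_derivative_def lambda_zero)
  have Hc: "continuous_on {c..d} H" using H_deriv by (intro DERIV_continuous_on) auto
  have "H u = H c" if "u \<in> {c..d}" for u
    by (rule has_derivative_zero_unique_strong_interval[of "{}" c d H, OF _ Hc refl])
       (use H_deriv0 that in auto)
  from this[of x] this[of y] show ?thesis
    using H_eq[of x] H_eq[of y] by (simp add: c_def d_def)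
qed

lemma has_integral_abs_sin:
  fixes k \<phi> x :: real
  assumes k: "k > 0"
  shows "((\<lambda>t. \<bar>sin (2*k*t + \<phi>)\<bar>) has_integral 2/k) {x..x + pi/k}"
proof -
  define f where "f t = \<bar>sin (2*k*t + \<phi>)\<bar>" for t
  define L where "L = pi/(2*k)"
  define x0 where "x0 = -\<phi>/(2*k)"
  have L: "L > 0" using k by (simp add: L_def)
  have fc: "continuous_on A f" for A unfolding f_def by (intro continuous_intros)
  have fi: "f integrable_on {a..b}" for a b by (intro integrable_continuous_real fc)
  have per: "f (u + L) = f u" for u
  proof -
    have "2*k*(u+L) + \<phi> = (2*k*u + \<phi>) + pi" using k by (simp add: L_def field_simps)
    then show ?thesis by (simp add: f_def sin_add)
  qed
  have "((\<lambda>t. sin (2*k*t + \<phi>)) has_integral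
          (-cos (2*k*(x0+L)+\<phi>)/(2*k) - (-cos (2*k*x0+\<phi>)/(2*k)))) {x0..x0+L}"
    using L k by (intro fundamental_theorem_of_calculus)
       (auto intro!: derivative_eq_intros simp: has_real_derivative_iff_has_vector_derivative[symmetric])
  moreover have ends: "2*k*x0 + \<phi> = 0" "2*k*(x0+L) + \<phi> = pi"
    using k by (simp_all add: x0_def L_def field_simps)
  moreover have "sin (2*k*t + \<phi>) = f t" if "t \<in> {x0..x0+L}" for t
  proof -
    have "2*k*x0 \<le> 2*k*t" "2*k*t \<le> 2*k*(x0+L)" using that k by auto
    then have "0 \<le> 2*k*t + \<phi>" "2*k*t + \<phi> \<le> pi" using ends by linarith+
    then show ?thesis by (simp add: f_def sin_ge_zero)
  qed
  ultimately have base: "integral {x0..x0+L} f = 1/k"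
    using k by (subst integral_unique[symmetric], subst has_integral_cong) auto
  have half: "integral {y..y+L} f = 1/k" for y
    using integral_periodic_shift[OF fc[of UNIV] L per, of y x0] base by simp
  have "integral {x..x+L} f + integral {x+L..x+L+L} f = integral {x..x+L+L} f"
    using L fi by (intro Henstock_Kurzweil_Integration.integral_combine) auto
  moreover have "x + L + L = x + pi/k" using k by (simp add: L_def)
  ultimately have "integral {x..x + pi/k} f = 2/k" using half[of x] half[of "x+L"] by (simp only:)
  then show ?thesis using fi[of x "x + pi/k"] unfolding f_def by (metis integrable_integral)
qed

lemma has_integral_sin_squared:
  fixes k \<psi> x :: real
  assumes k: "k > 0"
  shows "((\<lambda>t. (sin (k*t + \<psi>))\<^sup>2) has_integral pi/(2*k)) {x..x + pi/k}"
proof -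
  have "((\<lambda>t. t/2 - sin (2*k*t+2*\<psi>)/(4*k)) has_real_derivative (sin (k*t+\<psi>))\<^sup>2) (at t within S)" for t S
  proof -
    have "((\<lambda>t. t/2 - sin (2*k*t+2*\<psi>)/(4*k)) has_real_derivative 1/2 - cos (2*k*t+2*\<psi>)/2) (at t within S)"
      using k by - (rule derivative_eq_intros refl | simp)+
    moreover have "1/2 - cos (2*k*t+2*\<psi>)/2 = (sin (k*t+\<psi>))\<^sup>2"
      using cos_double_sin[of "k*t+\<psi>"] by (simp add: algebra_simps)
    ultimately show ?thesis by simp
  qed
  then have "((\<lambda>t. (sin (k*t + \<psi>))\<^sup>2) has_integral
     ((x + pi/k)/2 - sin (2*k*(x+pi/k)+2*\<psi>)/(4*k) - (x/2 - sin (2*k*x+2*\<psi>)/(4*k)))) {x..x+pi/k}"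
    using k by (intro fundamental_theorem_of_calculus)
       (auto simp: has_real_derivative_iff_has_vector_derivative[symmetric])
  moreover have "2*k*(x+pi/k)+2*\<psi> = (2*k*x+2*\<psi>) + 2*pi" using k by (simp add: field_simps)
  then have "sin (2*k*(x+pi/k)+2*\<psi>) = sin (2*k*x+2*\<psi>)" by (metis sin_periodic)
  ultimately show ?thesis by (simp add: field_simps)
qed

lemma has_integral_cis_minus:
  fixes k a b :: real
  assumes ab: "a \<le> b"
  shows "((\<lambda>t. Complex (- k * sin (k*t)) (- k * cos (k*t))) has_integral (cis (- (k*b)) - cis (- (k*a)))) {a..b}"
proof -
  have d1: "((\<lambda>t. cos (k*t)) has_real_derivative - k * sin (k*t)) (at t within S)" for t S
    by (rule derivative_eq_intros refl | simp)+
  have d2: "((\<lambda>t. - sin (k*t)) has_real_derivative - k * cos (k*t)) (at t within S)" for t S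
    by (rule derivative_eq_intros refl | simp)+
  have "((\<lambda>t. - k * sin (k*t)) has_integral (cos (k*b) - cos (k*a))) {a..b}"
    by (rule fundamental_theorem_of_calculus[OF ab])
       (use d1 in \<open>simp add: has_real_derivative_iff_has_vector_derivative[symmetric]\<close>)
  moreover have "((\<lambda>t. - k * cos (k*t)) has_integral (- sin (k*b) - - sin (k*a))) {a..b}"
    by (rule fundamental_theorem_of_calculus[OF ab])
       (use d2 in \<open>simp add: has_real_derivative_iff_has_vector_derivative[symmetric]\<close>)
  ultimately have "((\<lambda>t. Complex (- k * sin (k*t)) (- k * cos (k*t))) has_integral
      Complex (cos (k*b) - cos (k*a)) (- sin (k*b) - - sin (k*a))) {a..b}"
    by (rule has_integral_Complex)
  moreover have "Complex (cos (k*b) - cos (k*a)) (- sin (k*b) - - sin (k*a)) = cis (- (k*b)) - cis (- (k*a))"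
    by (simp add: complex_eq_iff)
  ultimately show ?thesis by simp
qed

lemma Im_mult_cis_polar: "Im (z * cis x) = cmod z * sin (Arg z + x)"
proof -
  have "z * cis x = complex_of_real (cmod z) * cis (Arg z) * cis x"
    using rcis_cmod_Arg[of z] by (simp add: rcis_def)
  also have "\<dots> = complex_of_real (cmod z) * cis (Arg z + x)" by (simp add: cis_mult mult.assoc)
  finally show ?thesis by simp
qed

lemma Re_cnj_mult_cis_polar: "Re (cnj z * (complex_of_real X * cis (- y))) = X * cmod z * cos (Arg z + y)"
proof -
  have cz: "cnj z = complex_of_real (cmod z) * cis (- Arg z)"
    using rcis_cmod_Arg[of z] by (metis cis_cnj complex_cnj_complex_of_real complex_cnj_mult rcis_def)
  have cis_add: "cis (- Arg z) * cis (- y) = cis (- (Arg z + y))" by (simp add: cis_mult)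
  have "cnj z * (complex_of_real X * cis (- y)) = complex_of_real (cmod z * X) * (cis (- Arg z) * cis (- y))"
    unfolding cz by (simp only: of_real_mult mult_ac)
  also have "\<dots> = complex_of_real (cmod z * X) * cis (- (Arg z + y))" by (simp only: cis_add)
  finally have eq: "cnj z * (complex_of_real X * cis (- y)) = complex_of_real (cmod z * X) * cis (- (Arg z + y))" .
  have Re_eq: "Re (complex_of_real a * cis b) = a * cos b" for a b by simp
  show ?thesis unfolding eq Re_eq cos_minus by (simp add: mult.commute)
qed

lemma norm_add_power2: "(cmod (z + d))\<^sup>2 = (cmod z)\<^sup>2 + 2 * Re (cnj z * d) + (cmod d)\<^sup>2"
  by (simp only: cmod_power2) (simp add: power2_eq_square algebra_simps)

lemma power2_add_ge:
  fixes f e r d :: real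
  assumes "\<bar>f\<bar> \<le> r" "\<bar>e\<bar> \<le> d"
  shows "(f + e)\<^sup>2 \<ge> f\<^sup>2 - 2 * r * d"
proof -
  have "\<bar>2 * f * e\<bar> \<le> 2 * r * d" using assms by (simp add: abs_mult mult_mono' mult.assoc)
  moreover have "(f + e)\<^sup>2 = f\<^sup>2 + 2 * f * e + e\<^sup>2" by (simp add: power2_eq_square algebra_simps)
  ultimately show ?thesis using zero_le_power2[of e] by linarith
qed

lemma mult_cos_ge_abs_sin_double:
  fixes X w r \<rho> \<delta> \<theta> :: real
  assumes \<rho>: "\<rho> \<ge> 0" and r: "r \<ge> 0" and \<delta>: "\<delta> \<ge> 0"
    and X: "\<bar>X\<bar> \<le> \<rho> * \<bar>w\<bar>" and w: "\<bar>w\<bar> \<le> r * \<bar>sin \<theta>\<bar> + \<delta> * r"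
  shows "X * r * cos \<theta> \<ge> - (\<rho> * r\<^sup>2 / 2) * \<bar>sin (2*\<theta>)\<bar> - \<rho> * \<delta> * r\<^sup>2"
proof -
  have "\<bar>X\<bar> * (r * \<bar>cos \<theta>\<bar>) \<le> \<rho> * (r * \<bar>sin \<theta>\<bar> + \<delta> * r) * (r * \<bar>cos \<theta>\<bar>)"
    using X w \<rho> r by (intro mult_right_mono) (auto intro: order_trans mult_left_mono)
  then have "\<bar>X * r * cos \<theta>\<bar> \<le> \<rho> * r\<^sup>2 * \<bar>sin \<theta> * cos \<theta>\<bar> + \<rho> * \<delta> * r\<^sup>2 * \<bar>cos \<theta>\<bar>"
    using r by (simp add: abs_mult power2_eq_square algebra_simps)
  moreover have "\<bar>sin \<theta> * cos \<theta>\<bar> = \<bar>sin (2*\<theta>)\<bar> / 2" by (simp add: sin_double abs_mult)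
  moreover have "\<rho> * \<delta> * r\<^sup>2 * \<bar>cos \<theta>\<bar> \<le> \<rho> * \<delta> * r\<^sup>2"
    using \<rho> \<delta> abs_cos_le_one[of \<theta>] by (simp add: mult_left_le)
  ultimately show ?thesis by (simp add: abs_le_iff)
qed

lemma harmonic_tail_unbounded:
  fixes E T :: real and M :: nat
  assumes E: "E > 0" and M: "M \<ge> 1"
  shows "\<exists>N. (\<Sum>n<N. E / real (M + n)) > T"
proof (rule ccontr)
  assume "\<nexists>N. (\<Sum>n<N. E / real (M + n)) > T"
  then have tail: "summable (\<lambda>n. E / real (M + n))"
    using E by (intro summableI_nonneg_bounded[where x = T]) (auto simp: not_less)
  have "summable (\<lambda>n. (E / real M) * inverse (real (Suc n)))"
  proof (rule summable_comparison_test'[OF tail])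
    fix n :: nat
    have "real (M + n) \<le> real M * real (Suc n)"
      using M mult_left_mono[of 1 "real M" "real n"] by (simp add: algebra_simps)
    then have "E / (real M * real (Suc n)) \<le> E / real (M + n)"
      using E M by (intro divide_left_mono) auto
    then show "norm ((E / real M) * inverse (real (Suc n))) \<le> E / real (M + n)"
      using E M by (simp add: field_simps)
  qed
  then have "summable (\<lambda>n. inverse (real (Suc n)))" using E M by simp
  then have "summable (\<lambda>n. inverse (real n))"
    using summable_Suc_iff[where f = "\<lambda>n. inverse (real n)"] by simp
  then show False using not_summable_harmonic[where 'a = real] by simp
qed

lemma div_Suc_le_growth_factor:
  fixes m \<beta> C :: real
  assumes m: "m \<ge> 1" and C: "C \<ge> 0" and large: "\<beta> + 2 * C \<le> (1 - \<beta>) * m"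
  shows "m / (m + 1) \<le> 1 - \<beta> / m - C / m\<^sup>2"
proof -
  have "(\<beta> + 2 * C) * m \<le> (1 - \<beta>) * m * m" using large m by (intro mult_right_mono) auto
  moreover have "C \<le> C * m" using C m by (simp add: mult_le_cancel_left1)
  ultimately have "m * (m * m) \<le> (m * m - \<beta> * m - C) * (m + 1)" by (simp add: algebra_simps)
  also have "\<dots> = (1 - \<beta> / m - C / m\<^sup>2) * (m + 1) * (m * m)"
    using m by (simp add: field_simps power2_eq_square)
  finally have "m \<le> (1 - \<beta> / m - C / m\<^sup>2) * (m + 1)"
    using m by (simp add: mult_le_cancel_right)
  then show ?thesis using m by (simp add: pos_divide_le_eq)
qed

lemma div_Suc_le_period_factor:
  fixes c k m :: real
  assumes k: "k > 0" and m: "m \<ge> 1"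
    and large: "2*c/(pi*k) + 8*c\<^sup>2/k\<^sup>2 \<le> (1 - 2*c/(pi*k)) * m"
  shows "m / (m + 1) \<le> 1 - 2 * (c / (m * pi)) / k - 4 * (c / (m * pi))\<^sup>2 * (pi/k)\<^sup>2"
proof -
  have "m / (m + 1) \<le> 1 - 2*c/(pi*k) / m - 4*c\<^sup>2/k\<^sup>2 / m\<^sup>2"
    using m large by (intro div_Suc_le_growth_factor) auto
  also have "\<dots> = 1 - 2 * (c / (m * pi)) / k - 4 * (c / (m * pi))\<^sup>2 * (pi/k)\<^sup>2"
    using k m by (simp add: field_simps power2_eq_square)
  finally show ?thesis .
qed

lemma quarter_le_period_factor:
  fixes c k m :: real
  assumes k: "k > 0" and m: "m \<ge> 1" and large: "16 * c / k \<le> m"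
  shows "pi/(4*k) \<le> pi/(2*k) - 4 * (c / (m * pi)) * (pi/k)\<^sup>2"
proof -
  have "4 * (c / (m * pi)) * (pi/k)\<^sup>2 = (pi/(4*k)) * (16 * c / (m * k))"
    using k m by (simp add: power2_eq_square mult_ac)
  also have "\<dots> \<le> pi/(4*k)"
  proof (rule mult_left_le)
    have "16 * c \<le> m * k" using large k by (simp add: divide_le_eq mult.commute)
    moreover have "0 < m * k" using m k by simp
    ultimately show "16 * c / (m * k) \<le> 1" by (simp add: pos_divide_le_eq)
  qed (use k in simp)
  finally have "4 * (c / (m * pi)) * (pi/k)\<^sup>2 \<le> pi/(4*k)" .
  moreover have "pi/(2*k) = pi/(4*k) + pi/(4*k)" by simp
  ultimately show ?thesis by linarith
qed

text \<open>For V = 0 the solutions of -w'' = k^2 w are w t = r sin (k t + \<phi>), for which this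
  is the constant r e^{i \<phi>}; in general it varies only through V (variation of constants).\<close>
definition pruefer :: "real \<Rightarrow> (real \<Rightarrow> real) \<Rightarrow> (real \<Rightarrow> real) \<Rightarrow> real \<Rightarrow> complex" where
  "pruefer k w w' t = Complex (w' t / k) (w t) * cis (- (k * t))"

locale real_sl_solution =
  fixes V w w' :: "real \<Rightarrow> real" and k x0 :: real
  assumes k_pos: "k > 0"
    and V_integrable: "\<And>s t. x0 \<le> s \<Longrightarrow> s \<le> t \<Longrightarrow> V absolutely_integrable_on {s..t}"
    and w_deriv: "\<And>x. x0 \<le> x \<Longrightarrow> (w has_real_derivative w' x) (at x within {x0..})"
    and w'_integral: "\<And>y x. x0 \<le> y \<Longrightarrow> y \<le> x \<Longrightarrow>
          ((\<lambda>t. (V t - k\<^sup>2) * w t) has_integral (w' x - w' y)) {y..x}"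
begin

abbreviation v :: "real \<Rightarrow> complex" where "v \<equiv> pruefer k w w'"

lemma w_deriv_within:
  assumes "x0 \<le> s" "x \<in> {s..t}"
  shows "(w has_real_derivative w' x) (at x within {s..t})"
  using assms by (intro has_field_derivative_subset[OF w_deriv]) auto

lemma continuous_on_w: "x0 \<le> s \<Longrightarrow> continuous_on {s..t} w"
  using w_deriv_within by (intro DERIV_continuous_on)

lemma continuous_on_w':
  assumes s: "x0 \<le> s"
  shows "continuous_on {s..t} w'"
proof (cases "s \<le> t")
  case True
  have "(\<lambda>t. (V t - k\<^sup>2) * w t) integrable_on {s..t}" using w'_integral[OF s True] by blast
  then have "continuous_on {s..t} (\<lambda>x. w' s + integral {s..x} (\<lambda>t. (V t - k\<^sup>2) * w t))"
    by (intro continuous_intros indefinite_integral_continuous_1)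
  moreover have "w' s + integral {s..x} (\<lambda>t. (V t - k\<^sup>2) * w t) = w' x" if "x \<in> {s..t}" for x
    using w'_integral[of s x] that s by (simp add: integral_unique)
  ultimately show ?thesis using continuous_on_cong by (metis (no_types, lifting))
qed simp

lemma continuous_on_v: "x0 \<le> s \<Longrightarrow> continuous_on {s..t} v"
  using continuous_on_w continuous_on_w' k_pos unfolding pruefer_def
  by (intro continuous_intros) auto

lemma w_eq_Im_v: "w t = Im (v t * cis (k*t))"
proof -
  have "v t * cis (k*t) = Complex (w' t / k) (w t) * (cis (- (k*t)) * cis (k*t))"
    by (simp add: pruefer_def)
  then show ?thesis by (simp add: cis_mult)
qed

lemma abs_w_le_norm_v: "\<bar>w t\<bar> \<le> cmod (v t)"
  using abs_Im_le_cmod[of "v t * cis (k*t)"] by (simp add: w_eq_Im_v norm_mult)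

lemma w'_w_has_integral:
  assumes a: "x0 \<le> a" and ab: "a \<le> b"
  shows "((\<lambda>t. Complex ((V t - k\<^sup>2) * w t / k) (w' t)) has_integral
           (Complex (w' b / k) (w b) - Complex (w' a / k) (w a))) {a..b}"
proof -
  have "((\<lambda>t. (V t - k\<^sup>2) * w t / k) has_integral ((w' b - w' a) / k)) {a..b}"
    using w'_integral[OF a ab] by (rule has_integral_divide)
  moreover have "(w' has_integral (w b - w a)) {a..b}"
    using ab w_deriv_within[OF a]
    by (intro fundamental_theorem_of_calculus) (auto simp: has_real_derivative_iff_has_vector_derivative)
  ultimately have "((\<lambda>t. Complex ((V t - k\<^sup>2) * w t / k) (w' t)) has_integral
      Complex ((w' b - w' a) / k) (w b - w a)) {a..b}"
    by (rule has_integral_Complex)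
  moreover have "Complex ((w' b - w' a) / k) (w b - w a) = Complex (w' b / k) (w b) - Complex (w' a / k) (w a)"
    by (simp add: complex_eq_iff diff_divide_distrib)
  ultimately show ?thesis by simp
qed

lemma v_has_integral:
  assumes s: "x0 \<le> s" and st: "s \<le> t"
  shows "((\<lambda>\<tau>. of_real (V \<tau> * w \<tau> / k) * cis (- (k*\<tau>))) has_integral (v t - v s)) {s..t}"
proof -
  define P where "P t = Complex (w' t / k) (w t)" for t
  define Q where "Q t = cis (- (k*t))" for t
  define g where "g t = Complex ((V t - k\<^sup>2) * w t / k) (w' t)" for t
  define h where "h t = Complex (- k * sin (k*t)) (- k * cos (k*t))" for t
  have "(\<lambda>x. (w x / k) * (V x - k\<^sup>2)) absolutely_integrable_on {s..t}"
    using V_integrable[OF s st] k_pos continuous_on_w[OF s]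
    by (intro absolutely_integrable_continuous_mult set_integral_diff(1) continuous_intros) auto
  then have "(\<lambda>x. (V x - k\<^sup>2) * w x / k) absolutely_integrable_on {s..t}"
    by (simp add: mult.commute)
  then have gi: "g absolutely_integrable_on {s..t}"
    unfolding g_def using absolutely_integrable_continuous_real[OF continuous_on_w'[OF s]]
    by (rule absolutely_integrable_Complex)
  have hi: "h absolutely_integrable_on {s..t}"
    unfolding h_def by (intro absolutely_integrable_continuous_real continuous_intros)
  have Pg: "(g has_integral (P b - P a)) {a..b}" if "s \<le> a" "a \<le> b" for a b
    unfolding g_def P_def using s that by (intro w'_w_has_integral) auto
  have Qh: "(h has_integral (Q b - Q a)) {a..b}" if "a \<le> b" for a b
    unfolding h_def Q_def using that by (rule has_integral_cis_minus)
  have "((\<lambda>t. g t * Q t + P t * h t) has_integral (P t * Q t - P s * Q s)) {s..t}"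
    using continuous_on_w[OF s] continuous_on_w'[OF s] k_pos Pg Qh
    by (intro has_integral_product_indefinite[OF st _ _ gi hi])
       (auto simp: P_def Q_def intro!: continuous_intros)
  moreover have "g \<tau> * Q \<tau> + P \<tau> * h \<tau> = of_real (V \<tau> * w \<tau> / k) * cis (- (k*\<tau>))" for \<tau>
    using k_pos by (simp add: g_def Q_def P_def h_def complex_eq_iff field_simps power2_eq_square)
  ultimately show ?thesis by (simp add: pruefer_def P_def Q_def)
qed

lemma abs_V_div_integrable: "x0 \<le> s \<Longrightarrow> s \<le> t \<Longrightarrow> (\<lambda>\<tau>. \<bar>V \<tau>\<bar> / k) integrable_on {s..t}"
  using set_integrable_abs[OF V_integrable] by (auto intro: integrable_on_divide simp: absolutely_integrable_on_def)

lemma abs_V_mult_norm_v_integrable: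
  assumes "x0 \<le> s" "s \<le> t"
  shows "(\<lambda>\<tau>. \<bar>V \<tau>\<bar> / k * cmod (v \<tau>)) integrable_on {s..t}"
proof -
  have "(\<lambda>\<tau>. cmod (v \<tau>) / k * \<bar>V \<tau>\<bar>) absolutely_integrable_on {s..t}"
    using assms k_pos continuous_on_v set_integrable_abs[OF V_integrable[OF assms]]
    by (intro absolutely_integrable_continuous_mult continuous_intros) auto
  then show ?thesis by (simp add: absolutely_integrable_on_def mult_ac)
qed

lemma norm_v_diff_le_integral:
  assumes s: "x0 \<le> s" and r: "s \<le> r"
  shows "cmod (v r - v s) \<le> integral {s..r} (\<lambda>\<tau>. \<bar>V \<tau>\<bar> / k * cmod (v \<tau>))"
proof -
  let ?F = "\<lambda>\<tau>. of_real (V \<tau> * w \<tau> / k) * cis (- (k*\<tau>))"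
  have vi: "(?F has_integral (v r - v s)) {s..r}" by (rule v_has_integral[OF s r])
  have "cmod (v r - v s) = cmod (integral {s..r} ?F)" using integral_unique[OF vi] by simp
  also have "\<dots> \<le> integral {s..r} (\<lambda>\<tau>. \<bar>V \<tau>\<bar> / k * cmod (v \<tau>))"
  proof (rule integral_norm_bound_integral)
    show "?F integrable_on {s..r}" using vi by blast
    show "(\<lambda>\<tau>. \<bar>V \<tau>\<bar> / k * cmod (v \<tau>)) integrable_on {s..r}"
      by (rule abs_V_mult_norm_v_integrable[OF s r])
    fix \<tau>
    have "cmod (?F \<tau>) = \<bar>V \<tau>\<bar> / k * \<bar>w \<tau>\<bar>"
      using k_pos unfolding norm_mult norm_cis norm_of_real by (simp add: abs_mult)
    also have "\<dots> \<le> \<bar>V \<tau>\<bar> / k * cmod (v \<tau>)"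
      using k_pos abs_w_le_norm_v[of \<tau>] by (intro mult_left_mono) auto
    finally show "cmod (?F \<tau>) \<le> \<bar>V \<tau>\<bar> / k * cmod (v \<tau>)" .
  qed
  finally show ?thesis .
qed

lemma norm_v_diff_le:
  assumes s: "x0 \<le> s" and st: "s \<le> t" and \<kappa>: "integral {s..t} (\<lambda>\<tau>. \<bar>V \<tau>\<bar> / k) \<le> \<kappa>" "\<kappa> < 1"
    and r: "r \<in> {s..t}"
  shows "cmod (v r - v s) \<le> \<kappa> * cmod (v s) / (1 - \<kappa>)"
  using k_pos by (intro norm_diff_le_if_integral_kernel_le[OF st continuous_on_v[OF s] _
        abs_V_div_integrable[OF s st] abs_V_mult_norm_v_integrable[OF s st] \<kappa> _ r]
        norm_v_diff_le_integral[OF s]) auto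

text \<open>A substitute for uniqueness of solutions of the initial value problem: on short
  intervals v moves by less than half its size, so it cannot reach 0.\<close>
lemma v_nonzero_propagates:
  assumes s: "x0 \<le> s" and vs: "v s \<noteq> 0" and T: "s \<le> T"
  shows "v T \<noteq> 0"
proof -
  define \<Phi> where "\<Phi> x = integral {s..x} (\<lambda>\<tau>. \<bar>V \<tau>\<bar> / k)" for x
  have "continuous_on {s..T} \<Phi>"
    unfolding \<Phi>_def by (intro indefinite_integral_continuous_1 abs_V_div_integrable[OF s T])
  then obtain \<delta> where \<delta>: "\<delta> > 0" and \<Phi>_close: "\<And>x x'. x \<in> {s..T} \<Longrightarrow> x' \<in> {s..T} \<Longrightarrow>
      dist x' x < \<delta> \<Longrightarrow> dist (\<Phi> x') (\<Phi> x) < 1/3"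
    using compact_uniformly_continuous[of "{s..T}" \<Phi>]
    unfolding uniformly_continuous_on_def by (metis compact_Icc zero_less_divide_1_iff zero_less_numeral)
  have "\<forall>t. s \<le> t \<and> t \<le> T \<and> t \<le> s + real j * (\<delta>/2) \<longrightarrow> v t \<noteq> 0" for j
  proof (induction j)
    case 0
    then show ?case using vs by auto
  next
    case (Suc j)
    show ?case
    proof (intro allI impI)
      fix t assume t: "s \<le> t \<and> t \<le> T \<and> t \<le> s + real (Suc j) * (\<delta>/2)"
      show "v t \<noteq> 0"
      proof (cases "t \<le> s + real j * (\<delta>/2)")
        case True
        then show ?thesis using Suc t by blast
      next
        case False
        define \<sigma> where "\<sigma> = s + real j * (\<delta>/2)"
        have "t - \<sigma> \<le> \<delta>/2" unfolding \<sigma>_def using t by (simp only: of_nat_Suc distrib_right) linarith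
        then have \<sigma>: "s \<le> \<sigma>" "\<sigma> \<le> t" "t - \<sigma> < \<delta>" using False \<delta> by (auto simp: \<sigma>_def)
        have v\<sigma>: "v \<sigma> \<noteq> 0" using Suc \<sigma> t by (auto simp: \<sigma>_def)
        have "integral {\<sigma>..t} (\<lambda>\<tau>. \<bar>V \<tau>\<bar> / k) = \<Phi> t - \<Phi> \<sigma>"
          unfolding \<Phi>_def using \<sigma> t
          by (intro integral_unique has_integral_integral_diff[OF abs_V_div_integrable[OF s T]]) auto
        also have "\<dots> \<le> 1/3"
        proof -
          have "dist (\<Phi> t) (\<Phi> \<sigma>) < 1/3" using \<Phi>_close[of \<sigma> t] \<sigma> t by (auto simp: dist_real_def)
          then show ?thesis unfolding dist_real_def by linarith
        qed
        finally have "cmod (v t - v \<sigma>) \<le> 1/3 * cmod (v \<sigma>) / (1 - 1/3)"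
          using \<sigma> t s by (intro norm_v_diff_le) auto
        then show ?thesis using v\<sigma> by (auto simp: norm_minus_commute)
      qed
    qed
  qed
  moreover obtain j :: nat where "(T - s) / (\<delta>/2) < j" using reals_Archimedean2 by blast
  then have "T \<le> s + real j * (\<delta>/2)" using \<delta> by (simp add: field_simps)
  ultimately show ?thesis using T by auto
qed

context
  fixes a \<rho> :: real
  assumes a: "x0 \<le> a" and \<rho>_nonneg: "\<rho> \<ge> 0"
    and V_le: "\<And>\<tau>. \<tau> \<in> {a..a + pi/k} \<Longrightarrow> \<bar>V \<tau>\<bar> / k \<le> \<rho>"
    and \<rho>_small: "\<rho> * (pi/k) \<le> 1/4"
begin

lemma norm_v_diff_period_le:
  assumes r: "r \<in> {a..a + pi/k}"
  shows "cmod (v r - v a) \<le> 2 * \<rho> * (pi/k) * cmod (v a)"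
proof -
  define \<kappa> where "\<kappa> = \<rho> * (pi/k)"
  have \<kappa>_small: "\<kappa> \<le> 1/4" using \<rho>_small by (simp add: \<kappa>_def)
  have a_le: "a \<le> a + pi/k" using k_pos by simp
  have "integral {a..a + pi/k} (\<lambda>\<tau>. \<bar>V \<tau>\<bar> / k) \<le> integral {a..a + pi/k} (\<lambda>\<tau>. \<rho>)"
    using V_le by (intro integral_le abs_V_div_integrable[OF a a_le]) auto
  also have "\<dots> = \<kappa>" using k_pos by (simp add: \<kappa>_def)
  finally have "cmod (v r - v a) \<le> \<kappa> * cmod (v a) / (1 - \<kappa>)"
    using \<kappa>_small by (intro norm_v_diff_le[OF a a_le _ _ r]) auto
  also have "\<dots> \<le> 2 * \<kappa> * cmod (v a)"
  proof -
    have "\<kappa> \<ge> 0" using \<rho>_nonneg k_pos by (simp add: \<kappa>_def)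
    then have "\<kappa> * cmod (v a) * 1 \<le> \<kappa> * cmod (v a) * (2 * (1 - \<kappa>))"
      using \<kappa>_small by (intro mult_left_mono) auto
    then show ?thesis using \<kappa>_small by (simp add: pos_divide_le_eq algebra_simps)
  qed
  finally show ?thesis by (simp add: \<kappa>_def)
qed

lemma w_near_sinusoid:
  assumes "\<tau> \<in> {a..a + pi/k}"
  shows "\<bar>w \<tau> - cmod (v a) * sin (Arg (v a) + k*\<tau>)\<bar> \<le> 2 * \<rho> * (pi/k) * cmod (v a)"
proof -
  have "w \<tau> - cmod (v a) * sin (Arg (v a) + k*\<tau>) = Im ((v \<tau> - v a) * cis (k*\<tau>))"
    unfolding Im_mult_cis_polar[symmetric] w_eq_Im_v[of \<tau>] by (simp add: algebra_simps)
  also have "\<bar>\<dots>\<bar> \<le> cmod (v \<tau> - v a)"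
    using abs_Im_le_cmod[of "(v \<tau> - v a) * cis (k*\<tau>)"] by (simp add: norm_mult)
  finally show ?thesis using norm_v_diff_period_le[OF assms] by linarith
qed

lemma integral_w_squared_period_ge:
  "integral {a..a + pi/k} (\<lambda>\<tau>. (w \<tau>)\<^sup>2) \<ge> (cmod (v a))\<^sup>2 * (pi/(2*k) - 4 * \<rho> * (pi/k)\<^sup>2)"
proof -
  define r where "r = cmod (v a)"
  define \<delta> where "\<delta> = 2 * \<rho> * (pi/k)"
  have "((\<lambda>\<tau>. r\<^sup>2 * (sin (k*\<tau> + Arg (v a)))\<^sup>2 - 2 * r * (\<delta> * r)) has_integral
          r\<^sup>2 * (pi/(2*k)) - pi/k * (2 * r * (\<delta> * r))) {a..a + pi/k}"
    using has_integral_const_real[of "2 * r * (\<delta> * r)" a "a + pi/k"] k_pos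
    by (intro has_integral_diff has_integral_mult_right has_integral_sin_squared) auto
  moreover have "(\<lambda>\<tau>. (w \<tau>)\<^sup>2) integrable_on {a..a + pi/k}"
    using continuous_on_w[OF a] by (intro integrable_continuous_real continuous_intros)
  moreover have "r\<^sup>2 * (sin (k*\<tau> + Arg (v a)))\<^sup>2 - 2 * r * (\<delta> * r) \<le> (w \<tau>)\<^sup>2"
    if "\<tau> \<in> {a..a + pi/k}" for \<tau>
  proof -
    have "\<bar>r * sin (Arg (v a) + k*\<tau>)\<bar> \<le> r" by (simp add: r_def abs_mult mult_left_le)
    from power2_add_ge[OF this, of "w \<tau> - r * sin (Arg (v a) + k*\<tau>)" "\<delta> * r"]
    show ?thesis using w_near_sinusoid[OF that]
      by (simp add: r_def \<delta>_def power_mult_distrib add.commute)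
  qed
  ultimately have "r\<^sup>2 * (pi/(2*k)) - pi/k * (2 * r * (\<delta> * r)) \<le> integral {a..a + pi/k} (\<lambda>\<tau>. (w \<tau>)\<^sup>2)"
    by (intro has_integral_le[OF _ integrable_integral]) auto
  then show ?thesis by (simp add: r_def \<delta>_def power2_eq_square algebra_simps)
qed

lemma Re_cnj_v_mult_derivative_ge:
  assumes \<tau>: "\<tau> \<in> {a..a + pi/k}"
  shows "Re (cnj (v a) * (of_real (V \<tau> * w \<tau> / k) * cis (- (k*\<tau>))))
      \<ge> - (\<rho> * (cmod (v a))\<^sup>2 / 2) * \<bar>sin (2*k*\<tau> + 2 * Arg (v a))\<bar> - \<rho> * (2 * \<rho> * (pi/k)) * (cmod (v a))\<^sup>2"
proof -
  define r where "r = cmod (v a)"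
  define \<psi> where "\<psi> = Arg (v a)"
  have "\<bar>V \<tau> * w \<tau> / k\<bar> = \<bar>V \<tau>\<bar> / k * \<bar>w \<tau>\<bar>" using k_pos by (simp add: abs_mult)
  also have "\<dots> \<le> \<rho> * \<bar>w \<tau>\<bar>" using V_le[OF \<tau>] by (intro mult_right_mono) auto
  finally have "\<bar>V \<tau> * w \<tau> / k\<bar> \<le> \<rho> * \<bar>w \<tau>\<bar>" .
  moreover have "\<bar>w \<tau>\<bar> \<le> r * \<bar>sin (\<psi> + k*\<tau>)\<bar> + 2 * \<rho> * (pi/k) * r"
  proof -
    have "\<bar>r * sin (\<psi> + k*\<tau>)\<bar> = r * \<bar>sin (\<psi> + k*\<tau>)\<bar>" by (simp add: r_def abs_mult)
    then show ?thesis using w_near_sinusoid[OF \<tau>] unfolding r_def \<psi>_def by linarith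
  qed
  ultimately have ineq: "V \<tau> * w \<tau> / k * r * cos (\<psi> + k*\<tau>)
      \<ge> - (\<rho> * r\<^sup>2 / 2) * \<bar>sin (2 * (\<psi> + k*\<tau>))\<bar> - \<rho> * (2 * \<rho> * (pi/k)) * r\<^sup>2"
    using \<rho>_nonneg k_pos by (intro mult_cos_ge_abs_sin_double) (auto simp: r_def)
  have Re_eq: "Re (cnj (v a) * (of_real (V \<tau> * w \<tau> / k) * cis (- (k*\<tau>)))) = V \<tau> * w \<tau> / k * r * cos (\<psi> + k*\<tau>)"
    unfolding r_def \<psi>_def by (rule Re_cnj_mult_cis_polar)
  have sin_eq: "sin (2*k*\<tau> + 2*\<psi>) = sin (2 * (\<psi> + k*\<tau>))" by (simp add: algebra_simps)
  show ?thesis unfolding Re_eq r_def[symmetric] \<psi>_def[symmetric] sin_eq using ineq .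
qed

lemma norm_v_period_growth:
  "(cmod (v (a + pi/k)))\<^sup>2 \<ge> (cmod (v a))\<^sup>2 * (1 - 2 * \<rho> / k - 4 * \<rho>\<^sup>2 * (pi/k)\<^sup>2)"
proof -
  let ?r = "cmod (v a)" and ?\<delta> = "2 * \<rho> * (pi/k)"
  define D where "D = v (a + pi/k) - v a"
  have a_le: "a \<le> a + pi/k" using k_pos by simp
  have "((\<lambda>\<tau>. of_real (V \<tau> * w \<tau> / k) * cis (- (k*\<tau>))) has_integral D) {a..a + pi/k}"
    unfolding D_def by (rule v_has_integral[OF a a_le])
  from has_integral_linear[OF has_integral_mult_right[OF this, of "cnj (v a)"] bounded_linear_Re]
  have Re_integral: "((\<lambda>\<tau>. Re (cnj (v a) * (of_real (V \<tau> * w \<tau> / k) * cis (- (k*\<tau>)))))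
      has_integral Re (cnj (v a) * D)) {a..a + pi/k}"
    by (simp only: o_def)
  have lower_integral: "((\<lambda>\<tau>. - (\<rho> * ?r\<^sup>2 / 2) * \<bar>sin (2*k*\<tau> + 2 * Arg (v a))\<bar> - \<rho> * ?\<delta> * ?r\<^sup>2) has_integral
          - (\<rho> * ?r\<^sup>2 / 2) * (2/k) - pi/k * (\<rho> * ?\<delta> * ?r\<^sup>2)) {a..a + pi/k}"
    using has_integral_const_real[of "\<rho> * ?\<delta> * ?r\<^sup>2" a "a + pi/k"] a_le
    by (intro has_integral_diff has_integral_mult_right has_integral_abs_sin k_pos) auto
  have Re_ge: "- (\<rho> * ?r\<^sup>2 / 2) * (2/k) - pi/k * (\<rho> * ?\<delta> * ?r\<^sup>2) \<le> Re (cnj (v a) * D)"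
    using Re_cnj_v_mult_derivative_ge by (rule has_integral_le[OF lower_integral Re_integral])
  have "(cmod (v (a + pi/k)))\<^sup>2 = ?r\<^sup>2 + 2 * Re (cnj (v a) * D) + (cmod D)\<^sup>2"
    using norm_add_power2[of "v a" D] by (simp add: D_def)
  moreover have "x = y + 2 * z + u \<Longrightarrow> l \<le> z \<Longrightarrow> 0 \<le> u \<Longrightarrow> y + 2 * l \<le> x" for x y z u l :: real
    by linarith
  ultimately have "(cmod (v (a + pi/k)))\<^sup>2 \<ge> ?r\<^sup>2 + 2 * (- (\<rho> * ?r\<^sup>2 / 2) * (2/k) - pi/k * (\<rho> * ?\<delta> * ?r\<^sup>2))"
    using Re_ge zero_le_power2 by blast
  then show ?thesis by (simp add: power2_eq_square algebra_simps)
qed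

end

lemma integral_w_squared_ge_harmonic:
  fixes M :: nat
  defines "K \<equiv> real M * (cmod (v (real M * pi / k)))\<^sup>2"
  assumes M: "M \<ge> 1" and start: "x0 \<le> real M * pi / k"
    and grow: "\<And>m. m \<ge> M \<Longrightarrow>
      real m * (cmod (v (real m * pi / k)))\<^sup>2 \<le> real (Suc m) * (cmod (v (real (Suc m) * pi / k)))\<^sup>2"
    and period: "\<And>m. m \<ge> M \<Longrightarrow>
      integral {real m * pi / k..real (Suc m) * pi / k} (\<lambda>\<tau>. (w \<tau>)\<^sup>2) \<ge> (cmod (v (real m * pi / k)))\<^sup>2 * (pi / (4*k))"
  shows "(\<Sum>n<N. pi / (4*k) * K / real (M + n)) \<le> integral {real M * pi / k..real (M + N) * pi / k} (\<lambda>\<tau>. (w \<tau>)\<^sup>2)"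
proof (induction N)
  case (Suc N)
  let ?t = "\<lambda>m :: nat. real m * pi / k"
  have t_mono: "?t m \<le> ?t n" if "m \<le> n" for m n using that k_pos by (simp add: divide_right_mono)
  have "K \<le> real (M + n) * (cmod (v (?t (M + n))))\<^sup>2" for n
  proof (induction n)
    case (Suc n)
    then show ?case using grow[of "M + n"] by simp
  qed (simp add: K_def)
  then have "K / real (M + N) \<le> (cmod (v (?t (M + N))))\<^sup>2"
    using M by (simp add: pos_divide_le_eq mult.commute del: of_nat_add)
  then have "pi / (4*k) * (K / real (M + N)) \<le> pi / (4*k) * (cmod (v (?t (M + N))))\<^sup>2"
    using k_pos by (intro mult_left_mono) auto
  then have "pi / (4*k) * K / real (M + N) \<le> (cmod (v (?t (M + N))))\<^sup>2 * (pi / (4*k))"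
    by (simp add: divide_divide_eq_left mult_ac)
  also have "\<dots> \<le> integral {?t (M + N)..?t (M + Suc N)} (\<lambda>\<tau>. (w \<tau>)\<^sup>2)"
    using period[of "M + N"] by simp
  finally have "pi / (4*k) * K / real (M + N) \<le> integral {?t (M + N)..?t (M + Suc N)} (\<lambda>\<tau>. (w \<tau>)\<^sup>2)" .
  moreover have "integral {?t M..?t (M + N)} (\<lambda>\<tau>. (w \<tau>)\<^sup>2) + integral {?t (M + N)..?t (M + Suc N)} (\<lambda>\<tau>. (w \<tau>)\<^sup>2)
      = integral {?t M..?t (M + Suc N)} (\<lambda>\<tau>. (w \<tau>)\<^sup>2)"
    using t_mono[of M "M + N"] t_mono[of "M + N" "M + Suc N"] continuous_on_w[OF start]
    by (intro Henstock_Kurzweil_Integration.integral_combine integrable_continuous_real continuous_intros) auto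
  ultimately show ?case using Suc by simp
qed simp

context
  fixes c X0 :: real
  assumes c_pos: "c > 0" and X0_pos: "X0 > 0"
    and V_decay: "\<And>t. t \<ge> X0 \<Longrightarrow> \<bar>V t\<bar> \<le> c / t"
    and c_small: "2 * c < pi * k"
begin

text \<open>\<open>m_growth\<close> holds for large m only because 2 c / (\<pi> k) < 1: this is where the
  constant 4 a^2 / \<pi>^2 comes from.\<close>
lemma period_step:
  fixes m :: nat
  assumes start: "max X0 x0 \<le> real m * pi / k" and m_ge: "16 * c / k \<le> real m"
    and m_growth: "2*c/(pi*k) + 8*c\<^sup>2/k\<^sup>2 \<le> (1 - 2*c/(pi*k)) * real m"
  shows "real m * (cmod (v (real m * pi / k)))\<^sup>2 \<le> real (Suc m) * (cmod (v (real (Suc m) * pi / k)))\<^sup>2"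
    and "integral {real m * pi / k..real (Suc m) * pi / k} (\<lambda>\<tau>. (w \<tau>)\<^sup>2)
           \<ge> (cmod (v (real m * pi / k)))\<^sup>2 * (pi / (4*k))"
proof -
  define a where "a = real m * pi / k"
  define \<rho> where "\<rho> = c / (real m * pi)"
  have k: "k > 0" by (rule k_pos)
  have "0 < 16 * c / k" using c_pos k by simp
  then have "m > 0" using m_ge by linarith
  then have m: "real m \<ge> 1" by simp
  have a_pos: "a > 0" and a: "x0 \<le> a" using start X0_pos by (auto simp: a_def)
  have next_a: "real (Suc m) * pi / k = a + pi/k" by (simp add: a_def add_divide_distrib algebra_simps)
  have \<rho>0: "\<rho> \<ge> 0" using c_pos m by (simp add: \<rho>_def)
  have V_le: "\<bar>V \<tau>\<bar> / k \<le> \<rho>" if "\<tau> \<in> {a..a + pi/k}" for \<tau>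
  proof -
    have "\<bar>V \<tau>\<bar> \<le> c / \<tau>" using V_decay[of \<tau>] that start by (auto simp: a_def)
    also have "\<dots> \<le> c / a" using that a_pos c_pos by (intro divide_left_mono) auto
    also have "\<dots> = \<rho> * k" using k m by (simp add: \<rho>_def a_def)
    finally show ?thesis using k by (simp add: divide_le_eq)
  qed
  have \<rho>_small: "\<rho> * (pi/k) \<le> 1/4"
    using m_ge c_pos k m by (simp add: \<rho>_def field_simps)
  have "real m * (cmod (v a))\<^sup>2 = (real m + 1) * ((cmod (v a))\<^sup>2 * (real m / (real m + 1)))"
    using m by (simp add: field_simps)
  also have "\<dots> \<le> (real m + 1) * ((cmod (v a))\<^sup>2 * (1 - 2 * \<rho> / k - 4 * \<rho>\<^sup>2 * (pi/k)\<^sup>2))"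
    using div_Suc_le_period_factor[OF k m m_growth] m
    by (intro mult_left_mono) (auto simp: \<rho>_def)
  also have "\<dots> \<le> (real m + 1) * (cmod (v (a + pi/k)))\<^sup>2"
    using norm_v_period_growth[OF a \<rho>0 V_le \<rho>_small] by (intro mult_left_mono) auto
  finally show "real m * (cmod (v (real m * pi / k)))\<^sup>2 \<le> real (Suc m) * (cmod (v (real (Suc m) * pi / k)))\<^sup>2"
    unfolding next_a a_def[symmetric] by (simp add: add.commute)
  have "(cmod (v a))\<^sup>2 * (pi/(4*k)) \<le> (cmod (v a))\<^sup>2 * (pi/(2*k) - 4 * \<rho> * (pi/k)\<^sup>2)"
    using quarter_le_period_factor[OF k m m_ge] by (intro mult_left_mono) (auto simp: \<rho>_def)
  also have "\<dots> \<le> integral {a..a + pi/k} (\<lambda>\<tau>. (w \<tau>)\<^sup>2)"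
    by (rule integral_w_squared_period_ge[OF a \<rho>0 V_le \<rho>_small])
  finally show "integral {real m * pi / k..real (Suc m) * pi / k} (\<lambda>\<tau>. (w \<tau>)\<^sup>2)
      \<ge> (cmod (v (real m * pi / k)))\<^sup>2 * (pi / (4*k))"
    by (simp only: next_a a_def)
qed

lemma eventually_period_step:
  obtains M :: nat where "M \<ge> 1" and "\<And>m. m \<ge> M \<Longrightarrow> x0 \<le> real m * pi / k"
    and "\<And>m. m \<ge> M \<Longrightarrow>
      real m * (cmod (v (real m * pi / k)))\<^sup>2 \<le> real (Suc m) * (cmod (v (real (Suc m) * pi / k)))\<^sup>2"
    and "\<And>m. m \<ge> M \<Longrightarrow>
      integral {real m * pi / k..real (Suc m) * pi / k} (\<lambda>\<tau>. (w \<tau>)\<^sup>2) \<ge> (cmod (v (real m * pi / k)))\<^sup>2 * (pi / (4*k))"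
proof -
  define \<beta> where "\<beta> = 2*c/(pi*k)"
  define C where "C = 4*c\<^sup>2/k\<^sup>2"
  have k: "k > 0" by (rule k_pos)
  have \<beta>: "\<beta> < 1" using c_small k by (simp add: \<beta>_def field_simps)
  obtain M :: nat where M: "max (max X0 x0 * k / pi) (max (16*c/k) ((\<beta> + 2*C) / (1 - \<beta>))) < M"
    using reals_Archimedean2 by blast
  have large: "max X0 x0 \<le> real m * pi / k \<and> 16 * c / k \<le> real m \<and>
      2*c/(pi*k) + 8*c\<^sup>2/k\<^sup>2 \<le> (1 - 2*c/(pi*k)) * real m" if "m \<ge> M" for m
  proof -
    have m: "max (max X0 x0 * k / pi) (max (16*c/k) ((\<beta> + 2*C) / (1 - \<beta>))) < real m"
      using M that by (meson le_less_trans of_nat_mono not_le)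
    then have "max X0 x0 * k / pi < real m" by linarith
    then have "max X0 x0 * k \<le> real m * pi" by (simp add: pos_divide_less_eq)
    then have "max X0 x0 \<le> real m * pi / k" by (simp only: pos_le_divide_eq[OF k])
    moreover have "16 * c / k \<le> real m" using m by linarith
    moreover have "(\<beta> + 2*C) / (1 - \<beta>) < real m" using m by linarith
    then have "\<beta> + 2*C < real m * (1 - \<beta>)" using \<beta> by (simp add: pos_divide_less_eq)
    then have "2*c/(pi*k) + 8*c\<^sup>2/k\<^sup>2 \<le> (1 - 2*c/(pi*k)) * real m"
      by (simp add: \<beta>_def C_def mult.commute)
    ultimately show ?thesis by blast
  qed
  show ?thesis
  proof
    have "0 < 16 * c / k" using c_pos k by simp
    then have "0 < real M" using M by linarith
    then show "M \<ge> 1" by simp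
  qed (use large period_step in auto)
qed

lemma integral_w_squared_unbounded:
  assumes w0: "w x0 \<noteq> 0"
  shows "\<exists>N\<ge>x0. integral {x0..N} (\<lambda>t. (w t)\<^sup>2) > T"
proof (rule ccontr)
  assume "\<not> (\<exists>N\<ge>x0. integral {x0..N} (\<lambda>t. (w t)\<^sup>2) > T)"
  then have bounded: "integral {x0..N} (\<lambda>t. (w t)\<^sup>2) \<le> T" if "x0 \<le> N" for N
    using that by (simp add: not_less)
  let ?t = "\<lambda>m :: nat. real m * pi / k"
  have t_mono: "?t m \<le> ?t n" if "m \<le> n" for m n using that k_pos by (simp add: divide_right_mono)
  obtain M :: nat where M: "M \<ge> 1" and start: "\<And>m. m \<ge> M \<Longrightarrow> x0 \<le> ?t m"
    and grow: "\<And>m. m \<ge> M \<Longrightarrow> real m * (cmod (v (?t m)))\<^sup>2 \<le> real (Suc m) * (cmod (v (?t (Suc m))))\<^sup>2"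
    and period: "\<And>m. m \<ge> M \<Longrightarrow> integral {?t m..?t (Suc m)} (\<lambda>\<tau>. (w \<tau>)\<^sup>2) \<ge> (cmod (v (?t m)))\<^sup>2 * (pi / (4*k))"
    by (fact eventually_period_step)
  define K where "K = real M * (cmod (v (?t M)))\<^sup>2"
  have "v x0 \<noteq> 0" using w0 w_eq_Im_v[of x0] by (metis Im_complex_of_real mult_zero_left of_real_0)
  then have "v (?t M) \<noteq> 0" by (rule v_nonzero_propagates[OF order_refl _ start[OF order_refl]])
  then have "pi / (4*k) * K > 0" using M k_pos by (simp add: K_def)
  then obtain N where "(\<Sum>n<N. pi / (4*k) * K / real (M + n)) > T"
    using harmonic_tail_unbounded M by blast
  moreover have "(\<Sum>n<N. pi / (4*k) * K / real (M + n)) \<le> integral {?t M..?t (M + N)} (\<lambda>\<tau>. (w \<tau>)\<^sup>2)"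
    unfolding K_def using M start grow period by (intro integral_w_squared_ge_harmonic) auto
  moreover have "integral {x0..?t M} (\<lambda>\<tau>. (w \<tau>)\<^sup>2) + integral {?t M..?t (M + N)} (\<lambda>\<tau>. (w \<tau>)\<^sup>2)
      = integral {x0..?t (M + N)} (\<lambda>\<tau>. (w \<tau>)\<^sup>2)"
    using start[of M] t_mono[of M "M + N"] continuous_on_w[of x0]
    by (intro Henstock_Kurzweil_Integration.integral_combine integrable_continuous_real continuous_intros) auto
  moreover have "integral {x0..?t M} (\<lambda>\<tau>. (w \<tau>)\<^sup>2) \<ge> 0"
    using continuous_on_w[of x0] by (intro integral_nonneg integrable_continuous_real continuous_intros) auto
  moreover have "integral {x0..?t (M + N)} (\<lambda>\<tau>. (w \<tau>)\<^sup>2) \<le> T" using bounded start[of "M + N"] by simp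
  ultimately show False by linarith
qed

end

end

lemma nonzero_Re_or_Im:
  fixes z :: complex
  assumes "z \<noteq> 0"
  obtains p :: "complex \<Rightarrow> real" where "bounded_linear p" and "\<And>r y. p (of_real r * y) = r * p y"
    and "\<And>y. \<bar>p y\<bar> \<le> cmod y" and "p z \<noteq> 0"
proof (cases "Re z = 0")
  case True
  then have "Im z \<noteq> 0" using assms complex_eq_iff by auto
  then show ?thesis using that[of Im] bounded_linear_Im abs_Im_le_cmod by auto
next
  case False
  then show ?thesis using that[of Re] bounded_linear_Re abs_Re_le_cmod by auto
qed

lemma real_sl_solution_component:
  fixes p :: "complex \<Rightarrow> real" and u u' :: "real \<Rightarrow> complex"
  assumes p: "bounded_linear p" and p_scale: "\<And>r z. p (of_real r * z) = r * p z"
    and k: "k > 0"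
    and LI: "\<And>s t. x0 \<le> s \<Longrightarrow> s \<le> t \<Longrightarrow> set_integrable lborel {s..t} V"
    and I: "{x0..} \<subseteq> I"
    and sol: "sl_solution V (k\<^sup>2) I u u'"
  shows "real_sl_solution V (\<lambda>t. p (u t)) (\<lambda>t. p (u' t)) k x0"
proof
  show "k > 0" by (rule k)
  show "V absolutely_integrable_on {s..t}" if "x0 \<le> s" "s \<le> t" for s t
    using set_borel_integral_eq_integral(1)[OF LI[OF that]]
      set_borel_integral_eq_integral(1)[OF set_integrable_norm[OF LI[OF that]]]
    by (simp add: absolutely_integrable_on_def)
  show "((\<lambda>t. p (u t)) has_real_derivative p (u' x)) (at x within {x0..})" if "x0 \<le> x" for x
  proof -
    have "(u has_vector_derivative u' x) (at x within {x0..})"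
      using sol that I by (auto simp: sl_solution_def intro: has_vector_derivative_within_subset)
    from bounded_linear.has_vector_derivative[OF p this] show ?thesis
      by (simp add: has_real_derivative_iff_has_vector_derivative)
  qed
  show "((\<lambda>t. (V t - k\<^sup>2) * p (u t)) has_integral (p (u' x) - p (u' y))) {y..x}"
    if "x0 \<le> y" "y \<le> x" for y x
  proof -
    have "x \<in> I" "y \<in> I" using that I by auto
    with sol have "((\<lambda>t. complex_of_real (V t - k\<^sup>2) * u t) has_integral (u' x - u' y)) {y..x}"
      using that unfolding sl_solution_def by blast
    from has_integral_linear[OF this p]
    have "((p \<circ> (\<lambda>t. complex_of_real (V t - k\<^sup>2) * u t)) has_integral p (u' x) - p (u' y)) {y..x}"
      by (simp only: linear_diff[OF bounded_linear.linear[OF p]])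
    moreover have "p \<circ> (\<lambda>t. complex_of_real (V t - k\<^sup>2) * u t) = (\<lambda>t. (V t - k\<^sup>2) * p (u t))"
      by (rule ext) (simp only: o_def p_scale)
    ultimately show ?thesis by simp
  qed
qed

lemma integral_power2_le_square_integrable:
  fixes p :: "complex \<Rightarrow> real" and u :: "real \<Rightarrow> complex"
  assumes p: "bounded_linear p" and p_le: "\<And>z. \<bar>p z\<bar> \<le> cmod z"
    and uc: "continuous_on {s..t} u" and sub: "{s..t} \<subseteq> I" and L2: "square_integrable_on I u"
  shows "integral {s..t} (\<lambda>x. (p (u x))\<^sup>2) \<le> integral I (\<lambda>x. (cmod (u x))\<^sup>2)"
proof -
  have pu: "(\<lambda>x. (p (u x))\<^sup>2) integrable_on {s..t}"
    using bounded_linear.continuous_on[OF p uc] by (intro integrable_continuous_real continuous_intros)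
  have u2: "(\<lambda>x. (cmod (u x))\<^sup>2) integrable_on {s..t}"
    using uc by (intro integrable_continuous_real continuous_intros)
  have "integral {s..t} (\<lambda>x. (p (u x))\<^sup>2) \<le> integral {s..t} (\<lambda>x. (cmod (u x))\<^sup>2)"
  proof (rule integral_le[OF pu u2])
    show "(p (u x))\<^sup>2 \<le> (cmod (u x))\<^sup>2" for x
      using power_mono[OF p_le[of "u x"] abs_ge_zero, of 2] by simp
  qed
  also have "\<dots> \<le> integral I (\<lambda>x. (cmod (u x))\<^sup>2)"
    using L2 sub by (intro integral_subset_le[OF _ u2 set_borel_integral_eq_integral(1)])
      (auto simp: square_integrable_on_def)
  finally show ?thesis .
qed

lemma abs_le_div_eventually_of_Limsup:
  fixes V :: "real \<Rightarrow> real"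
  assumes "Limsup at_top (\<lambda>x. ereal \<bar>x * V x\<bar>) = ereal a" and "a < c"
  obtains X0 where "X0 > 0" and "\<And>t. t \<ge> X0 \<Longrightarrow> \<bar>V t\<bar> \<le> c / t"
proof -
  have "eventually (\<lambda>x. ereal \<bar>x * V x\<bar> < ereal c) at_top"
    using assms by (intro Limsup_lessD) simp
  then obtain X where X: "\<And>x. x \<ge> X \<Longrightarrow> \<bar>x * V x\<bar> < c"
    unfolding eventually_at_top_linorder by auto
  show ?thesis
  proof (rule that[of "max X 1"])
    show "\<bar>V t\<bar> \<le> c / t" if "t \<ge> max X 1" for t
      using X[of t] that by (simp add: abs_mult pos_le_divide_eq mult.commute)
  qed simp
qed

lemma eigenvalue_le:
  fixes V :: "real \<Rightarrow> real" and u u' :: "real \<Rightarrow> complex"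
  assumes lim: "Limsup at_top (\<lambda>x. ereal \<bar>x * V x\<bar>) = ereal a"
    and LI: "\<And>s t. x0 \<le> s \<Longrightarrow> s \<le> t \<Longrightarrow> set_integrable lborel {s..t} V"
    and I: "{x0..} \<subseteq> I" and sol: "sl_solution V lam I u u'"
    and L2: "square_integrable_on I u" and u0: "u x0 \<noteq> 0"
  shows "lam \<le> 4 * a\<^sup>2 / pi\<^sup>2"
proof (rule ccontr)
  assume "\<not> lam \<le> 4 * a\<^sup>2 / pi\<^sup>2"
  then have lam_gt: "(2 * \<bar>a\<bar> / pi)\<^sup>2 < lam" by (simp add: power_divide power_mult_distrib)
  then have lam: "lam > 0" by (rule le_less_trans[OF zero_le_power2])
  have k: "2 * \<bar>a\<bar> / pi < sqrt lam" by (rule real_less_rsqrt[OF lam_gt])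
  define k where "k = sqrt lam"
  define c where "c = (max a 0 + pi * k / 2) / 2"
  have k_pos: "k > 0" and k2: "k\<^sup>2 = lam" using lam by (simp_all add: k_def)
  have a_lt: "\<bar>a\<bar> < pi * k / 2" using k by (simp add: k_def field_simps)
  then have max_lt: "max a 0 < pi * k / 2" by (simp add: abs_less_iff)
  have c_pos: "c > 0" using k_pos by (simp add: c_def add_nonneg_pos)
  have a_c: "a < c" using a_lt by (simp add: c_def)
  have c_small: "2 * c < pi * k" using max_lt by (simp add: c_def)
  obtain X0 where X0: "X0 > 0" and decay: "\<And>t. t \<ge> X0 \<Longrightarrow> \<bar>V t\<bar> \<le> c / t"
    using abs_le_div_eventually_of_Limsup[OF lim a_c] by blast
  obtain p :: "complex \<Rightarrow> real" where p: "bounded_linear p" and p_scale: "\<And>r z. p (of_real r * z) = r * p z"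
    and p_le: "\<And>z. \<bar>p z\<bar> \<le> cmod z" and pu0: "p (u x0) \<noteq> 0"
    using nonzero_Re_or_Im[OF u0] by blast
  interpret real_sl_solution V "\<lambda>t. p (u t)" "\<lambda>t. p (u' t)" k x0
    by (rule real_sl_solution_component[OF p p_scale k_pos LI I sol[folded k2]])
  obtain N where "N \<ge> x0" and N: "integral {x0..N} (\<lambda>t. (p (u t))\<^sup>2) > integral I (\<lambda>x. (cmod (u x))\<^sup>2)"
    using integral_w_squared_unbounded[OF c_pos X0 decay c_small pu0] by blast
  moreover have "continuous_on {x0..N} u"
  proof (rule continuous_on_vector_derivative)
    fix x assume "x \<in> {x0..N}"
    then have "x \<in> I" using I by auto
    with sol have "(u has_vector_derivative u' x) (at x within I)" unfolding sl_solution_def by blast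
    then show "(u has_vector_derivative u' x) (at x within {x0..N})"
      by (rule has_vector_derivative_within_subset) (use I in auto)
  qed
  ultimately show False
    using integral_power2_le_square_integrable[OF p p_le _ _ L2, of x0 N] I by force
qed

theorem theorem1p1:
  fixes V :: "real \<Rightarrow> real" and a :: real
  assumes "Limsup at_top (\<lambda>x. ereal \<bar>x * V x\<bar>) = ereal a"
  shows "(locally_integrable_pot {0..} V \<longrightarrow>
           (\<forall>\<alpha> lam. halfline_eigenvalue V \<alpha> lam \<longrightarrow> lam \<le> 4 * a\<^sup>2 / pi\<^sup>2)) \<and>
         (locally_integrable_pot UNIV V \<longrightarrow>
           (\<forall>lam. line_eigenvalue V lam \<longrightarrow> lam \<le> 4 * a\<^sup>2 / pi\<^sup>2))"
proof (intro conjI impI allI)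
  fix \<alpha> lam
  assume LI: "locally_integrable_pot {0..} V" and "halfline_eigenvalue V \<alpha> lam"
  then obtain u u' x1 where sol: "sl_solution V lam {0..} u u'" and L2: "square_integrable_on {0..} u"
    and x1: "x1 \<ge> 0" "u x1 \<noteq> 0"
    unfolding halfline_eigenvalue_def by blast
  \<comment> \<open>The boundary condition at 0 plays no role: only the solution on [x1, \<infinity>) is used.\<close>
  show "lam \<le> 4 * a\<^sup>2 / pi\<^sup>2"
    using LI x1 by (intro eigenvalue_le[OF assms _ _ sol L2 x1(2)]) (auto simp: locally_integrable_pot_def)
next
  fix lam
  assume LI: "locally_integrable_pot UNIV V" and "line_eigenvalue V lam"
  then obtain u u' x1 where sol: "sl_solution V lam UNIV u u'" and L2: "square_integrable_on UNIV u"
    and x1: "u x1 \<noteq> 0"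
    unfolding line_eigenvalue_def by blast
  show "lam \<le> 4 * a\<^sup>2 / pi\<^sup>2"
    using LI by (intro eigenvalue_le[OF assms _ _ sol L2 x1]) (auto simp: locally_integrable_pot_def)
qed

end
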